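(* Let $\gamma$ be a generator of the multiplicative group $\mathbb{F}_{q^m}^*$. Let $d\le q-1$ and let $\ell_1,\dots,\ell_d\in\{0,1,\dots,q-2\}$ be distinct. Then the $d\times d$ matrix $M$ over $\mathbb{F}_{q^m}$ whose $(i,j)$ entry, for $i=0,1,\dots,d-1$ and $j=1,\dots,d$, is $\gamma^{\ell_j(1+q+\cdots+q^{i-1})}$ (so the row $i=0$ is all ones, row $i=1$ is $(\gamma^{\ell_1},\dots,\gamma^{\ell_d})$, row $i=2$ is $(\gamma^{\ell_1(1+q)},\dots,\gamma^{\ell_d(1+q)})$, etc.) is full rank. *)

theory Defs
  imports "Jordan_Normal_Form.DL_Rank" "HOL-Computational_Algebra.Primes"
begin

end

(*
  Write the matrix as (x_j ^ [i]) with x_j = \<gamma> ^ l_j and [i] = 1 + q + ... + q^(i-1), so that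
  [i+1] = 1 + q [i]. Let c be a kernel vector with c_j \<noteq> 0. The Frobenius z \<mapsto> z^q is additive
  and bijective on a finite field; taking q-th roots c'_j of c_j x_j turns row i+1 of the system
  for c into row i of the system for c'. Hence c' - s c, with s chosen to kill coordinate j, is a
  kernel vector of the matrix with column j and the last row removed, and vanishes by induction.
  So x_k = s^q c_k^(q-1) whenever c_k \<noteq> 0; row 0 forces a second such k, and then
  \<gamma>^(l_j - l_k) would be a (q-1)-th power. It is not: q - 1 divides the order q^m - 1 of \<gamma>
  and 0 < |l_j - l_k| < q - 1.
*)
theory Submission
  imports Defs "HOL-Number_Theory.Residues"
begin

definition repunit :: "nat \<Rightarrow> nat \<Rightarrow> nat" where
  "repunit q i = (\<Sum>k<i. q ^ k)"

lemma repunit_Suc: "repunit q (Suc i) = 1 + q * repunit q i"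
  unfolding repunit_def by (subst sum.lessThan_Suc_shift) (simp add: sum_distrib_left)

lemma power_minus_one_eq_repunit:
  assumes "q > 0"
  shows "q ^ m - 1 = (q - 1) * repunit q m"
proof -
  have "int (q ^ m - 1) = int q ^ m - 1"
    using assms by simp
  also have "\<dots> = (int q - 1) * (\<Sum>k<m. int q ^ k)"
    by (rule power_diff_1_eq)
  also have "\<dots> = int ((q - 1) * repunit q m)"
    using assms by (simp add: repunit_def)
  finally show ?thesis by linarith
qed

(* Library version finite_field_power_card_eq_same requires the sort finite_field. *)
lemma power_card_minus_one_eq_one:
  fixes x :: "'a :: {field, finite}"
  assumes "x \<noteq> 0"
  shows "x ^ (card (UNIV :: 'a set) - 1) = 1"
proof -
  have "(\<Prod>y\<in>UNIV - {0}. y) = (\<Prod>y\<in>UNIV - {0}. x * y)"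
    by (rule prod.reindex_bij_witness[of _ "\<lambda>y. x * y" "\<lambda>y. y / x"]) (use assms in auto)
  also have "\<dots> = x ^ (card (UNIV :: 'a set) - 1) * (\<Prod>y\<in>UNIV - {0}. y)"
    by (simp add: prod.distrib card_Diff_singleton)
  finally show ?thesis
    by (simp add: prod_zero_iff)
qed

lemma power_mod_card_minus_one:
  fixes x :: "'a :: {field, finite}"
  assumes "x \<noteq> 0"
  shows "x ^ k = x ^ (k mod (card (UNIV :: 'a set) - 1))"
proof -
  let ?N = "card (UNIV :: 'a set) - 1"
  have "x ^ k = x ^ (?N * (k div ?N) + k mod ?N)"
    by (simp only: mult_div_mod_eq)
  also have "\<dots> = (x ^ ?N) ^ (k div ?N) * x ^ (k mod ?N)"
    by (simp only: power_add power_mult)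
  finally show ?thesis
    using power_card_minus_one_eq_one[OF assms] by simp
qed

lemma generator_ne_zero:
  fixes \<gamma> :: "'a :: {field, finite}"
  assumes gen: "\<forall>x :: 'a. x \<noteq> 0 \<longrightarrow> (\<exists>k :: nat. x = \<gamma> ^ k)"
    and card: "card (UNIV :: 'a set) > 2"
  shows "\<gamma> \<noteq> 0"
proof
  assume "\<gamma> = 0"
  then have "(UNIV :: 'a set) \<subseteq> {0, 1}"
    using gen by (auto simp: zero_power)
  then have "card (UNIV :: 'a set) \<le> 2"
    by (metis card_2_iff card_mono finite.emptyI finite.insertI zero_neq_one)
  with card show False by simp
qed

lemma inj_on_generator_power:
  fixes \<gamma> :: "'a :: {field, finite}"
  assumes gen: "\<forall>x :: 'a. x \<noteq> 0 \<longrightarrow> (\<exists>k :: nat. x = \<gamma> ^ k)"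
    and "\<gamma> \<noteq> 0"
  shows "inj_on (\<lambda>k. \<gamma> ^ k) {..<card (UNIV :: 'a set) - 1}"
proof (rule eq_card_imp_inj_on)
  let ?N = "card (UNIV :: 'a set) - 1"
  have "card (UNIV :: 'a set) \<ge> 2"
    using card_mono[of UNIV "{0, 1 :: 'a}"] by simp
  then have "k mod ?N < ?N" for k
    by simp
  have "(\<lambda>k. \<gamma> ^ k) ` {..<?N} = UNIV - {0}"
  proof
    show "(\<lambda>k. \<gamma> ^ k) ` {..<?N} \<subseteq> UNIV - {0}"
      using \<open>\<gamma> \<noteq> 0\<close> by auto
    show "UNIV - {0} \<subseteq> (\<lambda>k. \<gamma> ^ k) ` {..<?N}"
    proof
      fix x :: 'a
      assume "x \<in> UNIV - {0}"
      then obtain k where "x = \<gamma> ^ (k mod ?N)"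
        using gen power_mod_card_minus_one[OF \<open>\<gamma> \<noteq> 0\<close>] by auto
      with \<open>k mod ?N < ?N\<close> show "x \<in> (\<lambda>k. \<gamma> ^ k) ` {..<?N}"
        by blast
    qed
  qed
  then show "card ((\<lambda>k. \<gamma> ^ k) ` {..<?N}) = card {..<?N}"
    by (simp add: card_Diff_singleton)
qed simp

lemma generator_power_not_power:
  fixes \<gamma> y :: "'a :: {field, finite}"
  assumes gen: "\<forall>x :: 'a. x \<noteq> 0 \<longrightarrow> (\<exists>k :: nat. x = \<gamma> ^ k)"
    and dvd: "(q - 1) dvd (card (UNIV :: 'a set) - 1)"
    and t: "0 < t" "t < q - 1"
  shows "\<gamma> ^ t \<noteq> y ^ (q - 1)"
proof
  assume eq: "\<gamma> ^ t = y ^ (q - 1)"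
  let ?N = "card (UNIV :: 'a set) - 1"
  obtain M where M: "?N = M * (q - 1)"
    using dvd by (metis dvd_def mult.commute)
  have "?N \<noteq> 0"
    using card_mono[of UNIV "{0, 1 :: 'a}"] by simp
  then have "q - 1 \<le> ?N"
    using dvd by (simp add: dvd_imp_le)
  then have "\<gamma> \<noteq> 0"
    using t by (intro generator_ne_zero[OF gen]) simp
  then have "y \<noteq> 0"
    using eq t by (auto simp: zero_power)
  then obtain u where "y = \<gamma> ^ u"
    using gen by blast
  then have "\<gamma> ^ t = \<gamma> ^ ((u * (q - 1)) mod ?N)"
    using eq power_mod_card_minus_one[OF \<open>\<gamma> \<noteq> 0\<close>] by (simp add: power_mult)
  moreover have "t < ?N" "(u * (q - 1)) mod ?N < ?N"
    using t \<open>q - 1 \<le> ?N\<close> \<open>?N \<noteq> 0\<close> by simp_all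
  ultimately have "t = (u * (q - 1)) mod ?N"
    using inj_on_generator_power[OF gen \<open>\<gamma> \<noteq> 0\<close>] by (auto dest: inj_onD)
  also have "\<dots> = u mod M * (q - 1)"
    unfolding M by (rule mod_mult_mult2)
  finally show False
    using t by (cases "u mod M") auto
qed

lemma generator_powers_in_distinct_cosets:
  fixes \<gamma> a b :: "'a :: {field, finite}"
  assumes gen: "\<forall>x :: 'a. x \<noteq> 0 \<longrightarrow> (\<exists>k :: nat. x = \<gamma> ^ k)"
    and dvd: "(q - 1) dvd (card (UNIV :: 'a set) - 1)"
    and uv: "u < q - 1" "v < q - 1" and ab: "a \<noteq> 0" "b \<noteq> 0"
    and eq: "\<gamma> ^ u * a ^ (q - 1) = \<gamma> ^ v * b ^ (q - 1)"
  shows "u = v"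
proof -
  have ordered_case: False if lt: "u < v" "v < q - 1" and ab: "a \<noteq> 0" "b \<noteq> 0"
    and eq: "\<gamma> ^ u * a ^ (q - 1) = \<gamma> ^ v * b ^ (q - 1)" for u v and a b :: 'a
  proof -
    have "\<gamma> \<noteq> 0"
      using generator_power_not_power[OF gen dvd, of 1 0] lt by auto
    have "\<gamma> ^ u * a ^ (q - 1) = \<gamma> ^ u * (\<gamma> ^ (v - u) * b ^ (q - 1))"
      using eq lt by (simp add: mult.assoc flip: power_add)
    then have "\<gamma> ^ (v - u) = (a / b) ^ (q - 1)"
      using \<open>\<gamma> \<noteq> 0\<close> ab by (simp add: power_divide field_simps)
    with generator_power_not_power[OF gen dvd] lt show False
      by simp
  qed
  show "u = v"
  proof (rule ccontr)
    assume "u \<noteq> v"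
    then consider "u < v" | "v < u"
      by linarith
    then show False
    proof cases
      case 1
      then show False
        by (rule ordered_case[OF _ uv(2) ab eq])
    next
      case 2
      then show False
        by (rule ordered_case[OF _ uv(1) ab(2,1) eq[symmetric]])
    qed
  qed
qed

lemma CHAR_eq_if_card_eq_prime_power:
  assumes "prime p" and "card (UNIV :: 'a :: {field, finite} set) = p ^ n"
  shows "CHAR('a) = p"
proof -
  have "prime CHAR('a)"
    by (intro prime_CHAR_semidom finite_imp_CHAR_pos) simp
  moreover have "CHAR('a) dvd p ^ n"
    using CHAR_dvd_CARD[where 'a = 'a] assms(2) by simp
  ultimately show ?thesis
    using assms(1) by (metis prime_dvd_power primes_dvd_imp_eq)
qed

lemma surj_power_CHAR_power:
  assumes "q = CHAR('a :: {field, finite}) ^ k"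
  shows "surj (\<lambda>x :: 'a. x ^ q)"
proof (rule finite_UNIV_inj_surj)
  have "prime CHAR('a)"
    by (intro prime_CHAR_semidom finite_imp_CHAR_pos) simp
  show "inj (\<lambda>x :: 'a. x ^ q)"
  proof (rule injI)
    fix x y :: 'a
    assume "x ^ q = y ^ q"
    moreover have "((x - y) + y) ^ q = (x - y) ^ q + y ^ q"
      by (rule freshmans_dream'[OF \<open>prime CHAR('a)\<close> assms])
    ultimately show "x = y"
      by simp
  qed
qed simp

lemma repunit_power_combination_shift:
  fixes c c' x :: "'b \<Rightarrow> 'a :: field"
  assumes "prime CHAR('a)" and "q = CHAR('a) ^ k"
    and roots: "\<And>j. c' j ^ q = c j * x j"
    and row: "(\<Sum>j\<in>J. c j * x j ^ repunit q (Suc i)) = 0"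
  shows "(\<Sum>j\<in>J. c' j * x j ^ repunit q i) = 0"
proof -
  have "(\<Sum>j\<in>J. c' j * x j ^ repunit q i) ^ q = (\<Sum>j\<in>J. (c' j * x j ^ repunit q i) ^ q)"
    by (rule freshmans_dream_sum'[OF assms(1,2)])
  also have "\<dots> = (\<Sum>j\<in>J. c j * x j ^ repunit q (Suc i))"
  proof (rule sum.cong)
    fix j
    have "(c' j * x j ^ repunit q i) ^ q = c' j ^ q * x j ^ (q * repunit q i)"
      by (simp only: power_mult_distrib power_mult mult.commute[of q])
    also have "\<dots> = c j * x j ^ repunit q (Suc i)"
      by (simp only: roots repunit_Suc power_add power_one_right mult.assoc)
    finally show "(c' j * x j ^ repunit q i) ^ q = c j * x j ^ repunit q (Suc i)" .
  qed simp
  finally show ?thesis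
    using row by simp
qed

lemma sum_eq_zero_obtains_other_nonzero:
  fixes c :: "'b \<Rightarrow> 'a :: ab_group_add"
  assumes "finite J" "j \<in> J" "sum c J = 0" "c j \<noteq> 0"
  obtains j' where "j' \<in> J" "j' \<noteq> j" "c j' \<noteq> 0"
proof -
  have "(\<Sum>i\<in>J - {j}. c i) \<noteq> 0"
    using sum.remove[OF assms(1,2), of c] assms(3,4) by (simp add: add_eq_0_iff)
  then obtain j' where "j' \<in> J - {j}" "c j' \<noteq> 0"
    by (auto intro: sum.neutral)
  with that show thesis
    by blast
qed

lemma power_pred_eq_if_scaled_root:
  fixes s c x :: "'a :: field"
  assumes "(s * c) ^ q = c * x" and "c \<noteq> 0" and "q > 0"
  shows "x = s ^ q * c ^ (q - 1)"
proof -
  have "c * x = s ^ q * c ^ Suc (q - 1)"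
    using assms(1,3) by (simp add: power_mult_distrib)
  also have "\<dots> = c * (s ^ q * c ^ (q - 1))"
    by (simp only: power_Suc mult_ac)
  finally show ?thesis
    using assms(2) by simp
qed

lemma repunit_power_combination_eq_zero_imp_zero:
  fixes c x :: "'b \<Rightarrow> 'a :: field"
  assumes char: "prime CHAR('a)" "q = CHAR('a) ^ k"
    and perfect: "surj (\<lambda>z :: 'a. z ^ q)"
    and "finite J"
    and rows: "\<And>i. i < card J \<Longrightarrow> (\<Sum>j\<in>J. c j * x j ^ repunit q i) = 0"
    and "j \<in> J"
    and cosets: "\<And>i j a b. i \<in> J \<Longrightarrow> j \<in> J \<Longrightarrow> a \<noteq> 0 \<Longrightarrow> b \<noteq> 0 \<Longrightarrow>
                   x i * a ^ (q - 1) = x j * b ^ (q - 1) \<Longrightarrow> i = j"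
  shows "c j = 0"
  using \<open>finite J\<close> rows \<open>j \<in> J\<close> cosets
proof (induction "card J" arbitrary: J c j rule: less_induct)
  case less
  show "c j = 0"
  proof (rule ccontr)
    assume "c j \<noteq> 0"
    have "card J > 0"
      using less.prems(1,3) card_gt_0_iff by blast
    then have "sum c J = 0"
      using less.prems(2)[of 0] by (simp add: repunit_def)
    then obtain j' where j': "j' \<in> J" "j' \<noteq> j" "c j' \<noteq> 0"
      using sum_eq_zero_obtains_other_nonzero less.prems(1,3) \<open>c j \<noteq> 0\<close> by metis
    define c' where "c' i = inv_into UNIV (\<lambda>z. z ^ q) (c i * x i)" for i
    have roots: "c' i ^ q = c i * x i" for i
      unfolding c'_def using surj_f_inv_f[OF perfect] .
    define s where "s = c' j / c j"
    define e where "e i = c' i - s * c i" for i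
    have "e j = 0"
      using \<open>c j \<noteq> 0\<close> by (simp add: e_def s_def)
    have "e i = 0" if "i \<in> J - {j}" for i
    proof (rule less.hyps[of "J - {j}" e, OF _ _ _ that])
      show "card (J - {j}) < card J"
        by (rule card_Diff1_less[OF less.prems(1,3)])
      show "finite (J - {j})"
        using less.prems(1) by simp
      show "\<And>i i' a b. i \<in> J - {j} \<Longrightarrow> i' \<in> J - {j} \<Longrightarrow> a \<noteq> 0 \<Longrightarrow> b \<noteq> 0 \<Longrightarrow>
              x i * a ^ (q - 1) = x i' * b ^ (q - 1) \<Longrightarrow> i = i'"
        using less.prems(4) by blast
      fix r assume "r < card (J - {j})"
      then have r: "r < card J" "Suc r < card J"
        using less.prems(1,3) by auto
      have "(\<Sum>i\<in>J. e i * x i ^ repunit q r) =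
            (\<Sum>i\<in>J. c' i * x i ^ repunit q r) - s * (\<Sum>i\<in>J. c i * x i ^ repunit q r)"
        by (simp add: e_def left_diff_distrib sum_subtractf sum_distrib_left mult.assoc)
      also have "\<dots> = 0"
        using repunit_power_combination_shift[OF char roots less.prems(2)] less.prems(2) r by simp
      finally show "(\<Sum>i\<in>J - {j}. e i * x i ^ repunit q r) = 0"
        using sum.remove[OF less.prems(1,3), of "\<lambda>i. e i * x i ^ repunit q r"] \<open>e j = 0\<close> by simp
    qed
    with \<open>e j = 0\<close> have scaled: "c' i = s * c i" if "i \<in> J" for i
      using that by (cases "i = j") (auto simp: e_def)
    have "q > 0"
      unfolding char(2) using prime_gt_0_nat[OF char(1)] by simp
    have coset_rep: "x i = s ^ q * c i ^ (q - 1)" if "i \<in> J" "c i \<noteq> 0" for i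
      using roots[of i] scaled[OF that(1)]
      by (intro power_pred_eq_if_scaled_root[OF _ that(2) \<open>q > 0\<close>]) simp
    have "x j * c j' ^ (q - 1) = x j' * c j ^ (q - 1)"
      using coset_rep[OF less.prems(3) \<open>c j \<noteq> 0\<close>] coset_rep[OF j'(1,3)] by (simp add: mult_ac)
    then have "j = j'"
      by (rule less.prems(4)[OF less.prems(3) j'(1) j'(3) \<open>c j \<noteq> 0\<close>])
    with j'(2) show False
      by simp
  qed
qed

lemma (in vec_space) rank_eq_if_kernel_trivial:
  assumes "A \<in> carrier_mat n n"
    and "\<And>v. v \<in> carrier_vec n \<Longrightarrow> A *\<^sub>v v = 0\<^sub>v n \<Longrightarrow> v = 0\<^sub>v n"
  shows "rank A = n"
  using det_rank_iff[OF assms(1)] det_0_iff_vec_prod_zero_field[OF assms(1)] assms(2) by blast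

lemma rank_repunit_power_mat:
  fixes x :: "nat \<Rightarrow> 'a :: field"
  assumes char: "prime CHAR('a)" "q = CHAR('a) ^ k"
    and perfect: "surj (\<lambda>z :: 'a. z ^ q)"
    and cosets: "\<And>i j a b. i < d \<Longrightarrow> j < d \<Longrightarrow> a \<noteq> 0 \<Longrightarrow> b \<noteq> 0 \<Longrightarrow>
                   x i * a ^ (q - 1) = x j * b ^ (q - 1) \<Longrightarrow> i = j"
  shows "vec_space.rank d (mat d d (\<lambda>(i, j). x j ^ repunit q i)) = d"
proof (rule vec_space.rank_eq_if_kernel_trivial)
  fix v :: "'a vec"
  assume v: "v \<in> carrier_vec d" and "mat d d (\<lambda>(i, j). x j ^ repunit q i) *\<^sub>v v = 0\<^sub>v d"
  then have rows: "(\<Sum>j\<in>{0..<d}. v $ j * x j ^ repunit q i) = 0" if "i < card {0..<d}" for i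
    using that by (auto simp: mult_mat_vec_def scalar_prod_def mult.commute
        intro!: sum.cong dest!: arg_cong[where f = "\<lambda>w. w $ i"])
  have "v $ j = 0" if "j < d" for j
    using repunit_power_combination_eq_zero_imp_zero[OF char perfect _ rows] cosets that by simp
  then show "v = 0\<^sub>v d"
    using v by (intro eq_vecI) auto
qed simp

theorem corollary2p16:
  fixes q m d :: nat and \<gamma> :: "'a :: {field, finite}" and l :: "nat \<Rightarrow> nat"
  assumes "\<exists>p k. prime p \<and> k > 0 \<and> q = p ^ k"
    and "m \<ge> 1"
    and "card (UNIV :: 'a set) = q ^ m"
    and "\<forall>x :: 'a. x \<noteq> 0 \<longrightarrow> (\<exists>k :: nat. x = \<gamma> ^ k)"
    and "d \<le> q - 1"
    and "\<forall>j \<in> {1..d}. l j \<le> q - 2"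
    and "inj_on l {1..d}"
  shows "vec_space.rank d
           (mat d d (\<lambda>(i, j). \<gamma> ^ (l (j + 1) * (\<Sum>k<i. q ^ k)))) = d"
proof -
  obtain p k where "prime p" "k > 0" and q: "q = p ^ k"
    using assms(1) by blast
  then have "q \<ge> 2"
    using prime_ge_2_nat[of p] self_le_power[of p k] by simp
  have char: "CHAR('a) = p"
    using CHAR_eq_if_card_eq_prime_power[where 'a = 'a, OF \<open>prime p\<close>, of "k * m"] assms(3) q
    by (simp add: power_mult)
  have dvd: "(q - 1) dvd (card (UNIV :: 'a set) - 1)"
    using assms(3) power_minus_one_eq_repunit[of q m] \<open>q \<ge> 2\<close> by simp
  have l_bound: "l (i + 1) < q - 1" if "i < d" for i
  proof -
    have "l (i + 1) \<le> q - 2"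
      using assms(6) that by simp
    with \<open>q \<ge> 2\<close> show ?thesis
      by linarith
  qed
  have "vec_space.rank d (mat d d (\<lambda>(i, j). (\<gamma> ^ l (j + 1)) ^ repunit q i)) = d"
  proof (rule rank_repunit_power_mat)
    show "prime CHAR('a)" "q = CHAR('a) ^ k"
      using \<open>prime p\<close> q char by simp_all
    show "surj (\<lambda>z :: 'a. z ^ q)"
      using surj_power_CHAR_power q char by blast
    show "i = j" if "i < d" "j < d" "a \<noteq> 0" "b \<noteq> 0"
      and "\<gamma> ^ l (i + 1) * a ^ (q - 1) = \<gamma> ^ l (j + 1) * b ^ (q - 1)" for i j and a b :: 'a
      using generator_powers_in_distinct_cosets[OF assms(4) dvd l_bound l_bound that(3-5)]
        inj_onD[OF assms(7)] that(1,2) by fastforce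
  qed
  then show ?thesis
    by (simp add: repunit_def power_mult)
qed

end
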